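(* The number of unique configurations of length $n$ is $\Omega(2^n)$.
   Context: For a real sequence $A=(a_1,\dots,a_n)$, a configuration is a sequence $P=(p_1,\dots,p_n)$ with $p_\ell\in\{1,\dots,n-\ell+1\}$ for each $\ell$; $P$ is an output configuration for $A$ if for every $\ell=1,\dots,n$ the sum $a_{p_\ell}+\dots+a_{p_\ell+\ell-1}$ is maximum among all sums of $\ell$ consecutive entries of $A$. A configuration $P$ is unique if there exists $A\in\mathbb{R}^n$ whose only output configuration is $P$. *)

theory Defs
  imports Complex_Main "HOL-Library.Landau_Symbols"
begin

text \<open>A real sequence A = (a_1,...,a_n) is modelled as a function a :: nat => real,
  of which only the values a 1, ..., a n are relevant.
  A configuration P = (p_1,...,p_n) is a list of length n with P ! (l-1) = p_l.\<close>

definition window_sum :: "(nat \<Rightarrow> real) \<Rightarrow> nat \<Rightarrow> nat \<Rightarrow> real" where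
  "window_sum a p l = (\<Sum>i=p..<p+l. a i)"

definition is_config :: "nat \<Rightarrow> nat list \<Rightarrow> bool" where
  "is_config n P \<longleftrightarrow> length P = n \<and> (\<forall>l\<in>{1..n}. P ! (l-1) \<in> {1..n-l+1})"

definition output_config :: "nat \<Rightarrow> (nat \<Rightarrow> real) \<Rightarrow> nat list \<Rightarrow> bool" where
  "output_config n a P \<longleftrightarrow> is_config n P \<and>
     (\<forall>l\<in>{1..n}. \<forall>q\<in>{1..n-l+1}. window_sum a q l \<le> window_sum a (P ! (l-1)) l)"

definition unique_config :: "nat \<Rightarrow> nat list \<Rightarrow> bool" where
  "unique_config n P \<longleftrightarrow> is_config n P \<and>
     (\<exists>a :: nat \<Rightarrow> real. \<forall>Q. output_config n a Q \<longleftrightarrow> Q = P)"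

end

theory Submission
  imports Defs
begin

text \<open>For every \<open>D \<subseteq> {2..n}\<close> let the window of length \<open>k\<close> start at
  \<open>p\<^sub>k = 1 + #{j \<in> D. j > k}\<close>. Passing from length \<open>k - 1\<close> to \<open>k\<close> the window grows
  by one cell, on the left if \<open>k \<in> D\<close> and on the right otherwise, so the windows form a nested
  chain. Let \<open>a\<^sub>i\<close> count the windows containing cell \<open>i\<close>. A cell inside the window of
  length \<open>l\<close> lies in all \<open>n - l + 1\<close> longer-or-equal windows, a cell outside it lies in at
  most the \<open>n - l\<close> longer ones; hence that window is the unique window of maximal sum. Since
  \<open>D\<close> can be read off from the starts, this yields \<open>2\<^sup>n\<^sup>-\<^sup>1\<close> distinct unique
  configurations.\<close>

lemma sum_less_sum_of_swap:
  fixes f :: "'a \<Rightarrow> 'b::linordered_idom"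
  assumes "finite S" "finite T" "card S = card T" "S \<noteq> T"
    and "\<And>x. x \<in> S - T \<Longrightarrow> f x \<le> c" "\<And>y. y \<in> T - S \<Longrightarrow> c < f y"
  shows "sum f S < sum f T"
proof -
  have card_diff: "card (S - T) = card (T - S)"
    using assms(1-3) card_Int_Diff[of S T] card_Int_Diff[of T S] by (simp add: Int_commute)
  have "T - S \<noteq> {}"
    using assms(1,3,4) card_subset_eq[of S T] by auto
  have "sum f (S - T) \<le> sum (\<lambda>_. c) (S - T)"
    using assms(5) by (rule sum_mono)
  also have "\<dots> = sum (\<lambda>_. c) (T - S)"
    using card_diff by simp
  also have "\<dots> < sum f (T - S)"
    using assms(2) \<open>T - S \<noteq> {}\<close> assms(6) by (intro sum_strict_mono) auto
  finally have "sum f (S - T) < sum f (T - S)" .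
  moreover have "sum f S = sum f (S \<inter> T) + sum f (S - T)"
    using assms(1) by (rule sum.Int_Diff)
  moreover have "sum f T = sum f (S \<inter> T) + sum f (T - S)"
    using assms(2) sum.Int_Diff[of T f S] by (simp add: Int_commute)
  ultimately show ?thesis by simp
qed

definition nested_start :: "nat set \<Rightarrow> nat \<Rightarrow> nat" where
  "nested_start D k = 1 + card {j\<in>D. k < j}"

definition nested_window :: "nat set \<Rightarrow> nat \<Rightarrow> nat set" where
  "nested_window D k = {nested_start D k..<nested_start D k + k}"

definition nested_config :: "nat \<Rightarrow> nat set \<Rightarrow> nat list" where
  "nested_config n D = map (nested_start D) [1..<n+1]"

definition coverage :: "nat \<Rightarrow> nat set \<Rightarrow> nat \<Rightarrow> real" where
  "coverage n D i = real (card {k\<in>{1..n}. i \<in> nested_window D k})"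

lemma nested_start_split:
  assumes "finite D" "k \<le> l"
  shows "nested_start D k = nested_start D l + card {j\<in>D. k < j \<and> j \<le> l}"
proof -
  have "{j\<in>D. k < j} = {j\<in>D. k < j \<and> j \<le> l} \<union> {j\<in>D. l < j}"
    using assms(2) by auto
  moreover have "card ({j\<in>D. k < j \<and> j \<le> l} \<union> {j\<in>D. l < j}) =
      card {j\<in>D. k < j \<and> j \<le> l} + card {j\<in>D. l < j}"
    using assms(1) by (intro card_Un_disjoint) auto
  ultimately show ?thesis
    unfolding nested_start_def by simp
qed

lemma nested_start_Suc:
  assumes "finite D"
  shows "nested_start D k = nested_start D (Suc k) + (if Suc k \<in> D then 1 else 0)"
proof -
  have "k < j \<and> j \<le> Suc k \<longleftrightarrow> j = Suc k" for j
    by auto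
  then have "{j\<in>D. k < j \<and> j \<le> Suc k} = (if Suc k \<in> D then {Suc k} else {})"
    by auto
  then show ?thesis
    using nested_start_split[OF assms, of k "Suc k"] by simp
qed

lemma nested_window_mono:
  assumes "finite D" "k \<le> l"
  shows "nested_window D k \<subseteq> nested_window D l"
proof -
  have "card {j\<in>D. k < j \<and> j \<le> l} \<le> card {k<..l}"
    by (intro card_mono) auto
  then show ?thesis
    using nested_start_split[OF assms] assms(2) unfolding nested_window_def by auto
qed

lemma nested_start_bounds:
  assumes "D \<subseteq> {2..n}" "l \<in> {1..n}"
  shows "nested_start D l \<in> {1..n-l+1}"
proof -
  have "card {j\<in>D. l < j} \<le> card {l<..n}"
    using assms(1) by (intro card_mono) auto
  then show ?thesis
    unfolding nested_start_def using assms(2) by auto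
qed

lemma coverage_outside_window:
  assumes "finite D" "x \<notin> nested_window D l"
  shows "coverage n D x \<le> real (n - l)"
proof -
  have "l < k" if "x \<in> nested_window D k" for k
    using assms nested_window_mono[OF assms(1), of k l] that by (meson not_less subsetD)
  then have "{k\<in>{1..n}. x \<in> nested_window D k} \<subseteq> {l<..n}"
    by auto
  from card_mono[OF _ this] show ?thesis
    unfolding coverage_def by simp
qed

lemma coverage_inside_window:
  assumes "finite D" "l \<in> {1..n}" "x \<in> nested_window D l"
  shows "real (n - l) < coverage n D x"
proof -
  have "{l..n} \<subseteq> {k\<in>{1..n}. x \<in> nested_window D k}"
    using assms nested_window_mono[OF assms(1), of l] by fastforce
  from card_mono[OF _ this] show ?thesis
    using assms(2) unfolding coverage_def by simp
qed

lemma window_sum_coverage_strict_max: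
  assumes D: "D \<subseteq> {2..n}" and l: "l \<in> {1..n}" and "q \<noteq> nested_start D l"
  shows "window_sum (coverage n D) q l < window_sum (coverage n D) (nested_start D l) l"
proof -
  have "finite D"
    using D finite_subset by blast
  have "{q..<q+l} \<noteq> nested_window D l"
    using assms(3) l unfolding nested_window_def by (auto simp: atLeastLessThan_inj(1))
  then have "sum (coverage n D) {q..<q+l} < sum (coverage n D) (nested_window D l)"
    using coverage_outside_window[OF \<open>finite D\<close>, of _ l n]
      coverage_inside_window[OF \<open>finite D\<close> l] l
    by (intro sum_less_sum_of_swap[where c = "real (n - l)"]) (auto simp: nested_window_def)
  then show ?thesis
    unfolding window_sum_def nested_window_def by simp
qed

lemma window_sum_coverage_max_iff:
  assumes D: "D \<subseteq> {2..n}" and l: "l \<in> {1..n}" and q: "q \<in> {1..n-l+1}"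
  shows "(\<forall>q'\<in>{1..n-l+1}. window_sum (coverage n D) q' l \<le> window_sum (coverage n D) q l)
    \<longleftrightarrow> q = nested_start D l"
proof
  assume "\<forall>q'\<in>{1..n-l+1}. window_sum (coverage n D) q' l \<le> window_sum (coverage n D) q l"
  then have "window_sum (coverage n D) (nested_start D l) l \<le> window_sum (coverage n D) q l"
    using nested_start_bounds[OF D l] by blast
  then show "q = nested_start D l"
    using window_sum_coverage_strict_max[OF D l, of q] by linarith
next
  assume "q = nested_start D l"
  then show "\<forall>q'\<in>{1..n-l+1}. window_sum (coverage n D) q' l \<le> window_sum (coverage n D) q l"
    using window_sum_coverage_strict_max[OF D l] by (metis order.order_iff_strict)
qed

lemma nth_nested_config: "l \<in> {1..n} \<Longrightarrow> nested_config n D ! (l - 1) = nested_start D l"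
  unfolding nested_config_def by (subst nth_map) (auto simp del: upt_Suc)

lemma eq_nested_config_iff:
  assumes "length Q = n"
  shows "Q = nested_config n D \<longleftrightarrow> (\<forall>l\<in>{1..n}. Q ! (l - 1) = nested_start D l)"
proof -
  have "Q = nested_config n D \<longleftrightarrow> (\<forall>i<n. Q ! i = nested_config n D ! i)"
    using assms by (simp add: list_eq_iff_nth_eq nested_config_def)
  also have "\<dots> \<longleftrightarrow> (\<forall>l\<in>{1..n}. Q ! (l - 1) = nested_config n D ! (l - 1))"
  proof
    assume "\<forall>l\<in>{1..n}. Q ! (l - 1) = nested_config n D ! (l - 1)"
    then show "\<forall>i<n. Q ! i = nested_config n D ! i"
      by (metis Suc_leI atLeastAtMost_iff diff_Suc_1 le_add1 plus_1_eq_Suc)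
  qed auto
  finally show ?thesis
    using nth_nested_config by auto
qed

lemma is_config_nested_config:
  assumes "D \<subseteq> {2..n}"
  shows "is_config n (nested_config n D)"
  unfolding is_config_def
  using nth_nested_config nested_start_bounds[OF assms] by (simp add: nested_config_def)

lemma output_config_coverage_iff:
  assumes D: "D \<subseteq> {2..n}"
  shows "output_config n (coverage n D) Q \<longleftrightarrow> Q = nested_config n D"
proof -
  have max_iff: "(\<forall>q\<in>{1..n-l+1}. window_sum (coverage n D) q l
        \<le> window_sum (coverage n D) (Q ! (l - 1)) l) \<longleftrightarrow> Q ! (l - 1) = nested_start D l"
    if "is_config n Q" "l \<in> {1..n}" for l
    using that window_sum_coverage_max_iff[OF D] unfolding is_config_def by blast
  have "output_config n (coverage n D) Q \<longleftrightarrow>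
      is_config n Q \<and> (\<forall>l\<in>{1..n}. Q ! (l - 1) = nested_start D l)"
    unfolding output_config_def using max_iff by blast
  also have "\<dots> \<longleftrightarrow> Q = nested_config n D"
    using is_config_nested_config[OF D] eq_nested_config_iff[of Q n D]
    unfolding is_config_def by auto
  finally show ?thesis .
qed

lemma unique_config_nested_config:
  assumes "D \<subseteq> {2..n}"
  shows "unique_config n (nested_config n D)"
  unfolding unique_config_def
  using is_config_nested_config[OF assms] output_config_coverage_iff[OF assms] by blast

lemma inj_on_nested_config: "inj_on (nested_config n) (Pow {2..n})"
proof (rule inj_onI)
  fix D D' assume D: "D \<in> Pow {2..n}" and D': "D' \<in> Pow {2..n}"
    and eq: "nested_config n D = nested_config n D'"
  then have fin: "finite D" "finite D'"
    by (auto intro: finite_subset)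
  have start_eq: "nested_start D k = nested_start D' k" if "k \<in> {1..n}" for k
    using eq nth_nested_config[OF that] by metis
  have "j \<in> D \<longleftrightarrow> j \<in> D'" if j: "j \<in> {2..n}" for j
  proof -
    obtain k where k: "j = Suc k" "k \<in> {1..n}" "Suc k \<in> {1..n}"
      using j by (cases j) auto
    show ?thesis
      using nested_start_Suc[OF fin(1), of k] nested_start_Suc[OF fin(2), of k]
        start_eq[OF k(2)] start_eq[OF k(3)] k(1) by (auto split: if_splits)
  qed
  then show "D = D'"
    using D D' by blast
qed

lemma finite_configs: "finite {P. is_config n P}"
proof (rule finite_subset)
  show "{P. is_config n P} \<subseteq> {P. set P \<subseteq> {0..n} \<and> length P = n}"
  proof safe
    fix P x assume P: "is_config n P" and "x \<in> set P"
    then obtain i where "i < n" "P ! i = x"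
      by (auto simp: in_set_conv_nth is_config_def)
    moreover have "Suc i \<in> {1..n}"
      using \<open>i < n\<close> by simp
    ultimately show "x \<in> {0..n}"
      using P unfolding is_config_def by fastforce
  qed (simp add: is_config_def)
  show "finite {P. set P \<subseteq> {0..n} \<and> length P = n}"
    by (rule finite_lists_length_eq) simp
qed

lemma card_unique_configs_ge: "2 ^ (n - 1) \<le> card {P. unique_config n P}"
proof -
  have "2 ^ (n - 1) = card (Pow {2..n})"
    by (simp add: card_Pow)
  also have "\<dots> = card (nested_config n ` Pow {2..n})"
    by (rule card_image[OF inj_on_nested_config, symmetric])
  also have "\<dots> \<le> card {P. unique_config n P}"
    using unique_config_nested_config finite_configs
    by (intro card_mono) (auto simp: unique_config_def intro: finite_subset)
  finally show ?thesis .
qed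

theorem theorem3:
  shows "(\<lambda>n::nat. real (card {P. unique_config n P})) \<in> \<Omega>(\<lambda>n. (2::real) ^ n)"
proof (rule landau_omega.bigI[of "1/2"])
  show "\<forall>\<^sub>F n in at_top. norm (real (card {P. unique_config n P})) \<ge> 1/2 * norm ((2::real) ^ n)"
    using eventually_ge_at_top[of "1::nat"]
  proof eventually_elim
    case (elim n)
    have "1/2 * (2::real) ^ n = 2 ^ (n - 1)"
      using elim by (cases n) auto
    also have "\<dots> \<le> real (card {P. unique_config n P})"
      using card_unique_configs_ge[of n] by (metis of_nat_le_iff of_nat_numeral of_nat_power)
    finally show ?case by simp
  qed
qed simp

end
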